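(* Let $0<\delta\le\frac12$ be fixed. There exist constants $C_\delta>0$ and $N_\delta$ depending only on $\delta$ such that for all integers $n\ge N_\delta$ and all integers $d>1$, $$\Big|\frac1d\sum_{1\le h\le d-1}\Big(1-\delta+\delta\cos\big(\tfrac{2\pi h}{d}\big)\Big)^{n/2}\Big|\le C_\delta\,\frac{\log n}{\sqrt n}.$$ *)

theory Defs
  imports "HOL-Analysis.Analysis"
begin

end

theory Submission
  imports Defs
begin

text \<open>
  Writing \<open>1 - \<delta> + \<delta> cos (2\<pi>t) = 1 - 2\<delta> sin\<^sup>2 (\<pi>t)\<close> and using
  \<open>sin (\<pi>t) \<ge> min t (1 - t)\<close> on \<open>[0, 1]\<close>, the \<open>h\<close>-th term is at most
  \<open>exp (-\<delta> n m\<^sup>2)\<close>, where \<open>m\<close> is the distance of \<open>h/d\<close> to the nearest integer.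
  With \<open>a = sqrt (ln n / (\<delta> n))\<close> this is at most \<open>1/n\<close> as soon as \<open>m \<ge> a\<close>; the
  remaining at most \<open>2ad\<close> indices contribute at most \<open>1\<close> each. Hence the average
  is at most \<open>1/n + 2a = O(log n / sqrt n)\<close>.
\<close>

lemma sin_ge_cubic:
  fixes x :: real
  assumes "0 \<le> x"
  shows "x - x ^ 3 / 6 \<le> sin x"
proof -
  have "\<bar>sin x - x\<bar> \<le> x ^ 3 / 6"
    using Maclaurin_sin_bound[of x 3] assms by (simp add: sin_coeff_def eval_nat_numeral)
  then show ?thesis
    using abs_ge_minus_self[of "sin x - x"] by linarith
qed

lemma sin_pi_mult_ge:
  fixes t :: real
  assumes "0 \<le> t" "t \<le> 1/2"
  shows "t \<le> sin (pi * t)"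
proof -
  have "pi * t \<le> 2"
    using pi_less_4 assms by (intro order.trans[OF mult_left_mono[of t "1/2"]]) auto
  then have "(pi * t) ^ 2 \<le> 2 ^ 2"
    using assms by (intro power_mono) auto
  then have "pi * t * (pi * t) ^ 2 \<le> pi * t * 4"
    using assms by (intro mult_left_mono) auto
  then have "(pi * t) ^ 3 \<le> 4 * (pi * t)"
    by (simp add: power3_eq_cube power2_eq_square mult.commute)
  then have "pi * t / 3 \<le> pi * t - (pi * t) ^ 3 / 6"
    by linarith
  also have "\<dots> \<le> sin (pi * t)"
    using assms by (intro sin_ge_cubic) simp
  finally show ?thesis
    using pi_gt3 assms mult_right_mono[of 3 pi t] by linarith
qed

lemma sin_pi_mult_ge_min:
  fixes t :: real
  assumes "0 \<le> t" "t \<le> 1"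
  shows "min t (1 - t) \<le> sin (pi * t)"
proof (cases "t \<le> 1/2")
  case True
  then show ?thesis
    using sin_pi_mult_ge[of t] assms by simp
next
  case False
  have "sin (pi * (1 - t)) = sin (pi * t)"
    by (simp add: algebra_simps)
  then show ?thesis
    using sin_pi_mult_ge[of "1 - t"] assms False by simp
qed

lemma convex_comb_cos_bounds:
  fixes \<delta> y :: real
  assumes "0 \<le> \<delta>" "\<delta> \<le> 1/2"
  shows "0 \<le> 1 - \<delta> + \<delta> * cos y" and "1 - \<delta> + \<delta> * cos y \<le> 1"
  using mult_left_mono[OF cos_ge_minus_one[of y] assms(1)]
    mult_left_mono[OF cos_le_one[of y] assms(1)] assms
  by simp_all

lemma convex_comb_cos_powr_le_exp:
  fixes \<delta> t s :: real
  assumes "0 \<le> \<delta>" "\<delta> \<le> 1/2" "0 \<le> t" "t \<le> 1" "0 \<le> s"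
  shows "(1 - \<delta> + \<delta> * cos (2 * pi * t)) powr (s / 2) \<le> exp (- (\<delta> * s * (min t (1 - t))\<^sup>2))"
proof -
  define m where "m = min t (1 - t)"
  have "m\<^sup>2 \<le> (sin (pi * t))\<^sup>2"
    using sin_pi_mult_ge_min[OF assms(3,4)] assms(3,4) by (intro power_mono) (auto simp: m_def)
  then have "\<delta> * m\<^sup>2 \<le> \<delta> * (sin (pi * t))\<^sup>2"
    using assms(1) by (rule mult_left_mono)
  moreover have cos_eq: "cos (2 * pi * t) = 1 - 2 * (sin (pi * t))\<^sup>2"
    using cos_double_sin[of "pi * t"] by (simp add: mult.assoc)
  ultimately have "1 - \<delta> + \<delta> * cos (2 * pi * t) \<le> 1 - 2 * \<delta> * m\<^sup>2"
    unfolding cos_eq by (simp add: algebra_simps)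
  also have "\<dots> \<le> exp (- (2 * \<delta> * m\<^sup>2))"
    using exp_ge_add_one_self[of "- (2 * \<delta> * m\<^sup>2)"] by simp
  finally have "(1 - \<delta> + \<delta> * cos (2 * pi * t)) powr (s / 2) \<le> exp (- (2 * \<delta> * m\<^sup>2)) powr (s / 2)"
    using convex_comb_cos_bounds(1)[OF assms(1,2)] assms(5) by (intro powr_mono2) auto
  also have "\<dots> = exp (- (\<delta> * s * m\<^sup>2))"
    by (simp add: exp_powr_real)
  finally show ?thesis
    by (simp add: m_def)
qed

lemma convex_comb_cos_powr_le_inverse:
  fixes \<delta> t x :: real
  assumes "0 < \<delta>" "\<delta> \<le> 1/2" "1 \<le> x" "0 \<le> t" "t \<le> 1"
    and "sqrt (ln x / (\<delta> * x)) \<le> min t (1 - t)"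
  shows "(1 - \<delta> + \<delta> * cos (2 * pi * t)) powr (x / 2) \<le> 1 / x"
proof -
  define m where "m = min t (1 - t)"
  have "ln x / (\<delta> * x) \<le> m\<^sup>2"
    using power_mono[OF assms(6), of 2] assms(1,3) by (simp add: m_def)
  then have "ln x \<le> \<delta> * x * m\<^sup>2"
    using assms(1,3) by (simp add: pos_divide_le_eq mult.commute)
  have "(1 - \<delta> + \<delta> * cos (2 * pi * t)) powr (x / 2) \<le> exp (- (\<delta> * x * m\<^sup>2))"
    unfolding m_def using assms by (intro convex_comb_cos_powr_le_exp) auto
  also have "\<dots> \<le> exp (- ln x)"
    using \<open>ln x \<le> \<delta> * x * m\<^sup>2\<close> by simp
  also have "\<dots> = 1 / x"
    using assms(3) by (simp add: exp_minus inverse_eq_divide)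
  finally show ?thesis .
qed

lemma card_near_endpoints_le:
  fixes x :: real
  assumes "0 \<le> x"
  shows "real (card {h\<in>{1..<d}. real h \<le> x \<or> real (d - h) \<le> x}) \<le> 2 * x"
proof -
  define L where "L = {1..nat \<lfloor>x\<rfloor>}"
  have small_in_L: "h \<in> L" if "1 \<le> h" "real h \<le> x" for h :: nat
  proof -
    have "int h \<le> \<lfloor>x\<rfloor>"
      using that by (simp add: le_floor_iff)
    then show ?thesis
      using that by (simp add: L_def)
  qed
  have "{h\<in>{1..<d}. real h \<le> x \<or> real (d - h) \<le> x} \<subseteq> L \<union> (\<lambda>k. d - k) ` L"
  proof
    fix h assume h: "h \<in> {h\<in>{1..<d}. real h \<le> x \<or> real (d - h) \<le> x}"
    then consider "real h \<le> x" | "real (d - h) \<le> x" and "d - (d - h) = h" and "1 \<le> d - h"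
      by force
    then show "h \<in> L \<union> (\<lambda>k. d - k) ` L"
      using h small_in_L by cases (auto intro: image_eqI[of h _ "d - h"])
  qed
  then have "card {h\<in>{1..<d}. real h \<le> x \<or> real (d - h) \<le> x} \<le> card (L \<union> (\<lambda>k. d - k) ` L)"
    by (intro card_mono) (auto simp: L_def)
  also have "\<dots> \<le> card L + card ((\<lambda>k. d - k) ` L)"
    by (rule card_Un_le)
  also have "\<dots> \<le> card L + card L"
    by (intro add_left_mono card_image_le) (simp add: L_def)
  finally have "card {h\<in>{1..<d}. real h \<le> x \<or> real (d - h) \<le> x} \<le> card L + card L" .
  moreover have "real (card L) \<le> x"
    using assms by (simp add: L_def)
  ultimately show ?thesis
    by linarith
qed

lemma sum_bounded_above_except:
  fixes f :: "'a \<Rightarrow> real"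
  assumes "finite A" "B \<subseteq> A" "0 \<le> \<epsilon>"
    and "\<And>x. x \<in> B \<Longrightarrow> f x \<le> 1" and "\<And>x. x \<in> A - B \<Longrightarrow> f x \<le> \<epsilon>"
  shows "sum f A \<le> real (card A) * \<epsilon> + real (card B)"
proof -
  have "sum f A = sum f (A - B) + sum f B"
    using assms(2,1) by (rule sum.subset_diff)
  also have "\<dots> \<le> real (card (A - B)) * \<epsilon> + real (card B) * 1"
    using assms(4,5) by (intro add_mono sum_bounded_above) auto
  also have "\<dots> \<le> real (card A) * \<epsilon> + real (card B)"
    using assms(1,3) by (simp add: card_mono mult_right_mono)
  finally show ?thesis .
qed

lemma inverse_plus_sqrt_ln_le:
  fixes \<delta> x :: real
  assumes "0 < \<delta>" "exp 1 \<le> x"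
  shows "1 / x + 2 * sqrt (ln x / (\<delta> * x)) \<le> (1 + 2 / sqrt \<delta>) * ln x / sqrt x"
proof -
  have x: "1 \<le> x" "0 < x"
    using assms(2) one_le_exp_iff[of 1] by linarith+
  have ln: "1 \<le> ln x"
    using assms(2) x by (simp add: ln_ge_iff)
  have "1 / x \<le> 1 / sqrt x"
    using x real_sqrt_le_iff[of x "x * x"] by (intro divide_left_mono) (auto simp: real_sqrt_mult)
  also have "\<dots> \<le> ln x / sqrt x"
    using ln x by (intro divide_right_mono) auto
  finally have inverse_le: "1 / x \<le> ln x / sqrt x" .
  have "sqrt (ln x) \<le> ln x"
    using ln real_sqrt_le_iff[of "ln x" "ln x * ln x"] by (simp add: real_sqrt_mult)
  then have "2 * sqrt (ln x / (\<delta> * x)) \<le> (2 / sqrt \<delta>) * ln x / sqrt x"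
    using assms(1) x by (simp add: real_sqrt_divide real_sqrt_mult divide_right_mono)
  moreover have "(1 + 2 / sqrt \<delta>) * ln x / sqrt x = ln x / sqrt x + (2 / sqrt \<delta>) * ln x / sqrt x"
    by (simp add: distrib_right add_divide_distrib)
  ultimately show ?thesis
    using inverse_le by linarith
qed

lemma average_convex_comb_cos_powr_le:
  fixes \<delta> :: real and n d :: nat
  assumes "0 < \<delta>" "\<delta> \<le> 1/2" "3 \<le> n" "1 < d"
  shows "\<bar>(1 / real d) * (\<Sum>h=1..d-1. (1 - \<delta> + \<delta> * cos (2 * pi * real h / real d)) powr (real n / 2))\<bar>
    \<le> (1 + 2 / sqrt \<delta>) * ln (real n) / sqrt (real n)"
proof -
  define f where "f h = (1 - \<delta> + \<delta> * cos (2 * pi * real h / real d)) powr (real n / 2)" for h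
  define a where "a = sqrt (ln (real n) / (\<delta> * real n))"
  define B where "B = {h\<in>{1..<d}. real h \<le> a * real d \<or> real (d - h) \<le> a * real d}"
  have "0 \<le> a"
    using assms(1,3) by (simp add: a_def)
  have "f h \<le> 1 / real n" if "h \<in> {1..<d} - B" for h
    unfolding f_def using that assms
    by (intro convex_comb_cos_powr_le_inverse[of \<delta> "real n" "real h / real d", simplified])
      (auto simp: B_def a_def field_simps of_nat_diff)
  moreover have "f h \<le> 1" for h
    unfolding f_def using convex_comb_cos_bounds assms by (intro powr_le1) auto
  ultimately have "sum f {1..<d} \<le> real (card {1..<d}) * (1 / real n) + real (card B)"
    by (intro sum_bounded_above_except) (auto simp: B_def)
  also have "\<dots> \<le> real d * (1 / real n) + 2 * (a * real d)"
    unfolding B_def using card_near_endpoints_le[of "a * real d" d] \<open>0 \<le> a\<close> assms(4)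
    by (intro add_mono) (simp_all add: divide_right_mono)
  finally have "\<bar>1 / real d * sum f {1..<d}\<bar> \<le> 1 / real n + 2 * a"
    using assms(4) by (simp add: f_def sum_nonneg field_simps)
  also have "\<dots> \<le> (1 + 2 / sqrt \<delta>) * ln (real n) / sqrt (real n)"
    unfolding a_def using assms(1) exp_le assms(3) by (intro inverse_plus_sqrt_ln_le) auto
  also have "{1..<d} = {1..d-1}"
    using assms(4) by auto
  finally show ?thesis
    unfolding f_def .
qed

theorem lemma2p2:
  fixes \<delta> :: real
  assumes "0 < \<delta>" and "\<delta> \<le> 1/2"
  shows "\<exists>C>0. \<exists>N::nat. \<forall>n::nat\<ge>N. \<forall>d::nat. d > 1 \<longrightarrow>
    \<bar>(1 / real d) * (\<Sum>h=1..d-1. (1 - \<delta> + \<delta> * cos (2 * pi * real h / real d)) powr (real n / 2))\<bar>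
      \<le> C * ln (real n) / sqrt (real n)"
  using average_convex_comb_cos_powr_le[OF assms] assms(1)
  by (intro exI[of _ "1 + 2 / sqrt \<delta>"] conjI exI[of _ "3::nat"] allI impI) (auto simp: add_pos_pos)

end
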